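(* Let $n\ge 4$ and $\omega=\frac12(-1+\sqrt3\,i)$. With relations ordered $\mathcal R_0,\dots,\mathcal R_6$ as in the context and a suitable ordering $E_0=\frac1{|\Phi|}J,E_1,\dots,E_6$ of the primitive idempotents, the character table of $\mathcal X(GU(n,2),\Phi(n,2))$ has rows $E_0$: $(1,1,1,2^{2n-3},2^{2n-3},2^{2n-3},2^{2n-3}-(-2)^{n-1}-4)$; $E_1$: $(1,\omega,\bar\omega,-(-2)^{n-1},-(-2)^{n-1}\bar\omega,-(-2)^{n-1}\omega,0)$; $E_2$: $(1,\bar\omega,\omega,-(-2)^{n-1},-(-2)^{n-1}\omega,-(-2)^{n-1}\bar\omega,0)$; $E_3$: $(1,1,1,-(-2)^{n-2},-(-2)^{n-2},-(-2)^{n-2},3(-2)^{n-2}-3)$; $E_4$: $(1,\omega,\bar\omega,-(-2)^{n-2},-(-2)^{n-2}\bar\omega,-(-2)^{n-2}\omega,0)$; $E_5$: $(1,\bar\omega,\omega,-(-2)^{n-2},-(-2)^{n-2}\omega,-(-2)^{n-2}\bar\omega,0)$; $E_6$: $(1,1,1,-(-2)^{n-3},-(-2)^{n-3},-(-2)^{n-3},3(-2)^{n-3}-3)$.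
   Context: Let $\Phi=\Phi(n,2)=\{x\in\mathbb{F}_4^n\setminus\{0\}:\langle x,x\rangle=0\}$ with $\langle x,y\rangle=\sum_k x_ky_k^{2}$, and let $\mathcal X(GU(n,2),\Phi(n,2))$ be the (commutative) association scheme of orbitals of $GU(n,2)$ acting on $\Phi$ by $x\mapsto xU$. Fix a primitive element $\alpha$ of $\mathbb{F}_4$. For $n\ge4$ the relations are $\mathcal R_l=\{(x,y)\in\Phi^2:y=\alpha^lx\}$ for $l=0,1,2$, $\mathcal R_l=\{(x,y)\in\Phi^2:\langle x,y\rangle=\alpha^{l}\}$ for $l=3,4,5$, and $\mathcal R_6=\{(x,y)\in\Phi^2:\langle x,y\rangle=0,\ y\notin\mathrm{Span}\{x\}\}$. The character table is $P=[p_j(i)]$ with $A_j=\sum_i p_j(i)E_i$, where $A_j$ is the adjacency matrix of $\mathcal R_j$ and $E_i$ are the primitive idempotents of the Bose–Mesner algebra. *)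

theory Defs
  imports Complex_Main
begin

text \<open>F4 = {0, 1, a, b} with a^2 = b = a + 1 (so a and b are the two primitive elements).\<close>

datatype f4 = F0 | F1 | FA | FB

fun f4_add :: "f4 \<Rightarrow> f4 \<Rightarrow> f4" where
  "f4_add F0 y = y"
| "f4_add x F0 = x"
| "f4_add F1 F1 = F0" | "f4_add F1 FA = FB" | "f4_add F1 FB = FA"
| "f4_add FA F1 = FB" | "f4_add FA FA = F0" | "f4_add FA FB = F1"
| "f4_add FB F1 = FA" | "f4_add FB FA = F1" | "f4_add FB FB = F0"

fun f4_mul :: "f4 \<Rightarrow> f4 \<Rightarrow> f4" where
  "f4_mul F0 y = F0"
| "f4_mul x F0 = F0"
| "f4_mul F1 y = y"
| "f4_mul x F1 = x"
| "f4_mul FA FA = FB" | "f4_mul FA FB = F1"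
| "f4_mul FB FA = F1" | "f4_mul FB FB = FA"

fun f4_pow :: "f4 \<Rightarrow> nat \<Rightarrow> f4" where
  "f4_pow x 0 = F1"
| "f4_pow x (Suc k) = f4_mul x (f4_pow x k)"

definition f4_primitive :: "f4 \<Rightarrow> bool" where
  "f4_primitive x \<longleftrightarrow> x \<noteq> F0 \<and> f4_pow x 1 \<noteq> F1 \<and> f4_pow x 2 \<noteq> F1"

definition f4vecs :: "nat \<Rightarrow> (nat \<Rightarrow> f4) set" where
  "f4vecs n = {x. \<forall>k\<ge>n. x k = F0}"

fun f4_sum :: "nat \<Rightarrow> (nat \<Rightarrow> f4) \<Rightarrow> f4" where
  "f4_sum 0 f = F0"
| "f4_sum (Suc k) f = f4_add (f4_sum k f) (f k)"

definition herm :: "nat \<Rightarrow> (nat \<Rightarrow> f4) \<Rightarrow> (nat \<Rightarrow> f4) \<Rightarrow> f4" where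
  "herm n x y = f4_sum n (\<lambda>k. f4_mul (x k) (f4_pow (y k) 2))"

definition zero_vec :: "nat \<Rightarrow> f4" where "zero_vec = (\<lambda>_. F0)"

definition smul :: "f4 \<Rightarrow> (nat \<Rightarrow> f4) \<Rightarrow> (nat \<Rightarrow> f4)" where
  "smul c x = (\<lambda>k. f4_mul c (x k))"

definition Phi :: "nat \<Rightarrow> (nat \<Rightarrow> f4) set" where
  "Phi n = {x \<in> f4vecs n. x \<noteq> zero_vec \<and> herm n x x = F0}"

definition span1 :: "(nat \<Rightarrow> f4) \<Rightarrow> (nat \<Rightarrow> f4) set" where
  "span1 x = {smul c x | c. True}"

definition rel :: "nat \<Rightarrow> f4 \<Rightarrow> nat \<Rightarrow> ((nat \<Rightarrow> f4) \<times> (nat \<Rightarrow> f4)) set" where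
  "rel n \<alpha> l =
     (if l \<le> 2 then {(x,y). x \<in> Phi n \<and> y \<in> Phi n \<and> y = smul (f4_pow \<alpha> l) x}
      else if l \<le> 5 then {(x,y). x \<in> Phi n \<and> y \<in> Phi n \<and> herm n x y = f4_pow \<alpha> l}
      else if l = 6 then {(x,y). x \<in> Phi n \<and> y \<in> Phi n \<and> herm n x y = F0 \<and> y \<notin> span1 x}
      else {})"

text \<open>Complex matrices indexed by Phi(n,2), represented as functions (only entries on Phi x Phi matter).\<close>
type_synonym mat = "(nat \<Rightarrow> f4) \<Rightarrow> (nat \<Rightarrow> f4) \<Rightarrow> complex"

definition adj :: "nat \<Rightarrow> f4 \<Rightarrow> nat \<Rightarrow> mat" where
  "adj n \<alpha> l x y = (if (x, y) \<in> rel n \<alpha> l then 1 else 0)"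

definition mmul :: "nat \<Rightarrow> mat \<Rightarrow> mat \<Rightarrow> mat" where
  "mmul n M N x y = (\<Sum>z\<in>Phi n. M x z * N z y)"

definition in_bose_mesner :: "nat \<Rightarrow> f4 \<Rightarrow> mat \<Rightarrow> bool" where
  "in_bose_mesner n \<alpha> M \<longleftrightarrow>
     (\<exists>c :: nat \<Rightarrow> complex. \<forall>x\<in>Phi n. \<forall>y\<in>Phi n. M x y = (\<Sum>j<7. c j * adj n \<alpha> j x y))"

text \<open>E_0..E_6 are the primitive idempotents of the Bose--Mesner algebra (which has
 dimension at most 7): seven nonzero, pairwise orthogonal idempotents in the algebra
 summing to the identity.\<close>
definition primitive_idempotents :: "nat \<Rightarrow> f4 \<Rightarrow> (nat \<Rightarrow> mat) \<Rightarrow> bool" where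
  "primitive_idempotents n \<alpha> E \<longleftrightarrow>
     (\<forall>i<7. in_bose_mesner n \<alpha> (E i)) \<and>
     (\<forall>i<7. \<exists>x\<in>Phi n. \<exists>y\<in>Phi n. E i x y \<noteq> 0) \<and>
     (\<forall>i<7. \<forall>j<7. \<forall>x\<in>Phi n. \<forall>y\<in>Phi n.
         mmul n (E i) (E j) x y = (if i = j then E i x y else 0)) \<and>
     (\<forall>x\<in>Phi n. \<forall>y\<in>Phi n. (\<Sum>i<7. E i x y) = (if x = y then 1 else 0))"

definition omega :: complex where
  "omega = (-1 + sqrt 3 * \<i>) / 2"

text \<open>char_table n i j = p_j(i): row E_i, column R_j.\<close>
definition char_table :: "nat \<Rightarrow> nat \<Rightarrow> nat \<Rightarrow> complex" where
  "char_table n i j =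
    (let w = omega; wb = cnj omega;
         a = (-2::complex) ^ (n - 1); b = (-2::complex) ^ (n - 2); c = (-2::complex) ^ (n - 3);
         t = (2::complex) ^ (2 * n - 3)
     in ([ [1, 1, 1, t, t, t, t - a - 4],
           [1, w, wb, - a, - a * wb, - a * w, 0],
           [1, wb, w, - a, - a * w, - a * wb, 0],
           [1, 1, 1, - b, - b, - b, 3 * b - 3],
           [1, w, wb, - b, - b * wb, - b * w, 0],
           [1, wb, w, - b, - b * w, - b * wb, 0],
           [1, 1, 1, - c, - c, - c, 3 * c - 3] ] ! i) ! j)"

end

theory Submission
  imports Defs
begin

text \<open>
  The Bose--Mesner algebra is spanned by the seven matrices \<open>S\<^sub>c\<close> (\<open>c \<noteq> 0\<close>), with
  \<open>S\<^sub>c x y = [y = c x]\<close>, and \<open>T\<^sub>l\<close> (\<open>l \<in> F\<^sub>4\<close>), with \<open>T\<^sub>l x y = \<psi>(l \<langle>x, y\<rangle>)\<close> for the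
  trace character \<open>\<psi>\<close> of \<open>F\<^sub>4\<close>. Products \<open>T\<^sub>l T\<^sub>m\<close> are character sums over the isotropic
  vectors; detecting isotropy by a second character turns them into a Gauss sum over \<open>F\<^sub>4\<^sup>n\<close>,
  which equals \<open>q = (-2)\<^sup>n\<close>. So the algebra has structure constants that are polynomials
  in \<open>q\<close>, its primitive idempotents and eigenvalues can be written down explicitly in terms of
  \<open>q\<close> and the cube roots of unity \<open>\<omega>\<close>, \<open>cnj \<omega>\<close>, and the character table is obtained by
  evaluating each idempotent on the seven relations.
\<close>

subsection \<open>The field \<open>F\<^sub>4\<close>\<close>

fun f4_inverse :: "f4 \<Rightarrow> f4" where
  "f4_inverse F0 = F0" | "f4_inverse F1 = F1" | "f4_inverse FA = FB" | "f4_inverse FB = FA"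

lemma all_f4: "(\<forall>x::f4. P x) \<longleftrightarrow> P F0 \<and> P F1 \<and> P FA \<and> P FB"
  by (metis f4.exhaust)

instantiation f4 :: field
begin
definition "0 = F0"
definition "1 = F1"
definition "(+) = f4_add"
definition "(*) = f4_mul"
definition "uminus = (\<lambda>x::f4. x)"
definition "(-) = f4_add"
definition "inverse = f4_inverse"
definition "x div y = f4_mul x (f4_inverse y)"
instance
  by standard
    (unfold zero_f4_def one_f4_def plus_f4_def times_f4_def uminus_f4_def minus_f4_def
       inverse_f4_def divide_f4_def, ((atomize (full))?, simp add: all_f4)+)
end

instance f4 :: finite
proof
  have "UNIV = {F0, F1, FA, FB}"
    using f4.exhaust by blast
  then show "finite (UNIV :: f4 set)"
    by (metis finite.emptyI finite.insertI)
qed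

lemmas f4_op_defs = zero_f4_def one_f4_def plus_f4_def times_f4_def uminus_f4_def minus_f4_def
  inverse_f4_def divide_f4_def

lemma F0_eq_zero: "F0 = 0" and F1_eq_one: "F1 = 1"
  by (simp_all add: f4_op_defs)

lemma f4_cases: "(x::f4) = 0 \<or> x = 1 \<or> x = FA \<or> x = FB"
  by (cases x) (auto simp: f4_op_defs)

lemma UNIV_f4: "(UNIV :: f4 set) = {0, 1, FA, FB}"
  using f4_cases by auto

lemma FA_FB_arith:
  "FA * FA = FB" "FB * FB = FA" "FA * FB = 1" "FB * FA = 1"
  "FA + 1 = FB" "FB + 1 = FA" "1 + FA = FB" "1 + FB = FA" "FA + FB = 1" "FB + FA = 1"
  "FA \<noteq> 0" "FB \<noteq> 0" "FA \<noteq> 1" "FB \<noteq> 1"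
  by (simp_all add: f4_op_defs)

lemma f4_add_self [simp]: "(x::f4) + x = 0"
  by (cases x) (simp_all add: f4_op_defs)

lemma f4_two [simp]: "(2::f4) = 0"
  by (metis f4_add_self one_add_one)

lemma f4_add_eq [simp]: "f4_add x y = x + y"
  by (simp add: plus_f4_def)

lemma f4_mul_eq [simp]: "f4_mul x y = x * y"
  by (simp add: times_f4_def)

lemma f4_pow_eq [simp]: "f4_pow x k = x ^ k"
  by (induct k) (simp_all add: F1_eq_one)

lemma f4_sum_eq [simp]: "f4_sum n f = (\<Sum>k<n. f k)"
  by (induct n) (simp_all add: F0_eq_zero add.commute)

lemma f4_add_eq_0_iff: "(x::f4) + y = 0 \<longleftrightarrow> x = y"
  by (metis add_diff_cancel_right' f4_add_self)

lemma f4_power_4: "(x::f4) ^ 4 = x"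
  using f4_cases[of x] by (auto simp: power4_eq_xxxx FA_FB_arith)

lemma f4_square_square: "((x::f4) ^ 2) ^ 2 = x"
  by (simp add: f4_power_4 flip: power_mult)

lemma f4_cube_nonzero: "(x::f4) \<noteq> 0 \<Longrightarrow> x ^ 3 = 1"
  using f4_cases[of x] by (auto simp: power3_eq_cube FA_FB_arith)

lemma f4_square_mult_self: "(x::f4) \<noteq> 0 \<Longrightarrow> x ^ 2 * x = 1" "(x::f4) \<noteq> 0 \<Longrightarrow> x * x ^ 2 = 1"
  using f4_cube_nonzero[of x] by (simp_all add: power3_eq_cube power2_eq_square mult.assoc)

lemma f4_square_add: "((x::f4) + y) ^ 2 = x ^ 2 + y ^ 2"
proof -
  have "(x + y) ^ 2 = x ^ 2 + y ^ 2 + (x * y + x * y)"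
    by (simp add: power2_eq_square algebra_simps)
  then show ?thesis
    by simp
qed

lemma f4_square_sum: "(\<Sum>k<(n::nat). f k :: f4) ^ 2 = (\<Sum>k<n. f k ^ 2)"
  by (induct n) (simp_all add: f4_square_add)

lemma f4_norm_F2: "(x::f4) * x ^ 2 = 0 \<or> x * x ^ 2 = 1"
  using f4_cases[of x] by (auto simp: FA_FB_arith power2_eq_square)

lemma f4_primitive_iff: "f4_primitive \<alpha> \<longleftrightarrow> \<alpha> = FA \<or> \<alpha> = FB"
  using f4_cases[of \<alpha>] by (auto simp: f4_primitive_def F0_eq_zero F1_eq_one FA_FB_arith power2_eq_square)

lemma f4_primitive_cases: "f4_primitive \<alpha> \<Longrightarrow> c = 0 \<or> c = 1 \<or> c = \<alpha> \<or> c = (\<alpha>::f4) ^ 2"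
  using f4_cases[of c] by (auto simp: f4_primitive_iff FA_FB_arith power2_eq_square)

text \<open>\<open>a + a\<^sup>2\<close> is the trace of \<open>a\<close> over \<open>F\<^sub>2\<close>.\<close>

definition trace_char :: "f4 \<Rightarrow> complex" where
  "trace_char a = (if a + a ^ 2 = 0 then 1 else -1)"

lemma trace_char_simps [simp]:
  "trace_char 0 = 1" "trace_char 1 = 1" "trace_char FA = -1" "trace_char FB = -1"
  by (simp_all add: trace_char_def FA_FB_arith power2_eq_square)

lemma trace_char_add: "trace_char (a + b) = trace_char a * trace_char b"
  using f4_cases[of a] f4_cases[of b] by (auto simp: FA_FB_arith)

lemma trace_char_sum: "trace_char (sum f A) = (\<Prod>a\<in>A. trace_char (f a))"
  by (induct A rule: infinite_finite_induct) (simp_all add: trace_char_add)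

lemma trace_char_conj: "trace_char (l * t ^ 2) = trace_char (l ^ 2 * t)"
  using f4_cases[of l] f4_cases[of t] by (auto simp: FA_FB_arith power2_eq_square)

lemma trace_char_FA_trace: "trace_char (FA * (t + t ^ 2)) = trace_char t"
  using f4_cases[of t] by (auto simp: FA_FB_arith power2_eq_square)

lemma sum_UNIV_f4: "(\<Sum>c\<in>UNIV. f c) = f 0 + f 1 + f FA + (f FB :: complex)"
  by (simp add: UNIV_f4 FA_FB_arith add.assoc)

lemma trace_char_orthogonal: "(\<Sum>c\<in>UNIV. trace_char (c * d ^ 2)) = (if d = 0 then 4 else 0)"
  using f4_cases[of d] by (auto simp: sum_UNIV_f4 FA_FB_arith power2_eq_square)

lemma trace_char_gauss:
  "(\<Sum>c\<in>UNIV. trace_char (FA * (c * c ^ 2)) * trace_char (c * d ^ 2)) = -2 * trace_char (FA * (d * d ^ 2))"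
  using f4_cases[of d] by (auto simp: sum_UNIV_f4 FA_FB_arith power2_eq_square)

lemma herm_eq_sum: "herm n x y = (\<Sum>k<n. x k * y k ^ 2)"
  by (simp add: herm_def)

lemma smul_apply [simp]: "smul c x k = c * x k"
  by (simp add: smul_def)

lemma smul_smul [simp]: "smul a (smul b x) = smul (a * b) x"
  by (simp add: fun_eq_iff mult.assoc)

lemma smul_one [simp]: "smul 1 x = x"
  by (simp add: fun_eq_iff)

lemma smul_zero: "smul 0 x = zero_vec"
  by (simp add: fun_eq_iff zero_vec_def F0_eq_zero)

lemma herm_smul_left: "herm n (smul c x) y = c * herm n x y"
  by (simp add: herm_eq_sum sum_distrib_left mult.assoc)

lemma herm_smul_right: "herm n x (smul c y) = c ^ 2 * herm n x y"
  by (simp add: herm_eq_sum sum_distrib_left algebra_simps)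

lemma herm_add_left: "herm n (\<lambda>k. u k + v k) z = herm n u z + herm n v z"
  by (simp add: herm_eq_sum distrib_right sum.distrib)

lemma herm_add_right: "herm n z (\<lambda>k. u k + v k) = herm n z u + herm n z v"
  by (simp add: herm_eq_sum f4_square_add distrib_left sum.distrib)

lemma herm_swap: "herm n x y = herm n y x ^ 2"
  by (simp add: herm_eq_sum f4_square_sum power_mult_distrib f4_square_square f4_power_4 mult.commute)

lemma herm_self_F2: "herm n z z = 0 \<or> herm n z z = 1"
proof (induct n)
  case (Suc n)
  then show ?case
    using f4_norm_F2[of "z n"] by (auto simp: herm_eq_sum)
qed (simp add: herm_eq_sum)

lemma herm_zero_vec [simp]: "herm n zero_vec w = 0" "herm n w zero_vec = 0"
  by (simp_all add: herm_eq_sum zero_vec_def F0_eq_zero)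

subsection \<open>Character sums over \<open>F\<^sub>4\<^sup>n\<close> and over \<open>Phi n\<close>\<close>

lemma f4vecs_0: "f4vecs 0 = {zero_vec}"
  by (auto simp: f4vecs_def zero_vec_def)

lemma f4vecs_Suc: "f4vecs (Suc n) = (\<lambda>(z, c). z(n := c)) ` (f4vecs n \<times> UNIV)"
proof (intro equalityI subsetI)
  fix x assume x: "x \<in> f4vecs (Suc n)"
  have "x = (\<lambda>(z, c). z(n := c)) (x(n := F0), x n)"
    by simp
  moreover have "x(n := F0) \<in> f4vecs n"
    using x by (auto simp: f4vecs_def)
  ultimately show "x \<in> (\<lambda>(z, c). z(n := c)) ` (f4vecs n \<times> UNIV)"
    by blast
qed (auto simp: f4vecs_def)

lemma inj_on_fun_upd_f4vecs: "inj_on (\<lambda>(z, c). z(n := c)) (f4vecs n \<times> UNIV)"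
proof (rule inj_onI, clarsimp)
  fix z c z' c' assume z: "z \<in> f4vecs n" "z' \<in> f4vecs n" and eq: "z(n := c) = z'(n := c')"
  have "z k = z' k" for k
    using z fun_cong[OF eq, of k] by (cases "k = n") (auto simp: f4vecs_def)
  then show "z = z' \<and> c = c'"
    using fun_cong[OF eq, of n] by auto
qed

lemma finite_f4vecs: "finite (f4vecs n)"
  by (induct n) (simp_all add: f4vecs_0 f4vecs_Suc)

lemma sum_prod_f4vecs:
  "(\<Sum>z\<in>f4vecs n. \<Prod>k<n. g k (z k)) = (\<Prod>k<n. \<Sum>c\<in>UNIV. g k c :: complex)"
proof (induct n)
  case (Suc n)
  have "(\<Sum>z\<in>f4vecs (Suc n). \<Prod>k<Suc n. g k (z k))
      = (\<Sum>(z, c)\<in>f4vecs n \<times> UNIV. (\<Prod>k<n. g k (z k)) * g n c)"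
    unfolding f4vecs_Suc sum.reindex[OF inj_on_fun_upd_f4vecs]
    by (rule sum.cong) (auto intro!: prod.cong)
  also have "\<dots> = (\<Sum>z\<in>f4vecs n. \<Prod>k<n. g k (z k)) * (\<Sum>c\<in>UNIV. g n c)"
    by (simp add: sum.cartesian_product[symmetric] sum_product)
  finally show ?case
    using Suc by simp
qed (simp add: f4vecs_0)

lemma zero_vec_in_f4vecs: "zero_vec \<in> f4vecs n"
  by (simp add: f4vecs_def zero_vec_def)

lemma f4vecs_eq_zero_vec_iff: "w \<in> f4vecs n \<Longrightarrow> w = zero_vec \<longleftrightarrow> (\<forall>k<n. w k = 0)"
  by (auto simp: f4vecs_def zero_vec_def F0_eq_zero fun_eq_iff) (metis not_le)

lemma sum_f4vecs_trace_char:
  assumes "w \<in> f4vecs n"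
  shows "(\<Sum>z\<in>f4vecs n. trace_char (herm n z w)) = (if w = zero_vec then 4 ^ n else 0)"
proof -
  have "(\<Sum>z\<in>f4vecs n. trace_char (herm n z w)) = (\<Prod>k<n. \<Sum>c\<in>UNIV. trace_char (c * w k ^ 2))"
    by (simp add: herm_eq_sum trace_char_sum sum_prod_f4vecs[where g = "\<lambda>k c. trace_char (c * w k ^ 2)"])
  also have "\<dots> = (\<Prod>k<n. if w k = 0 then 4 else 0)"
    by (simp add: trace_char_orthogonal)
  also have "\<dots> = (if \<forall>k<n. w k = 0 then 4 ^ n else 0)"
    by (induct n) (auto simp: less_Suc_eq)
  finally show ?thesis
    by (simp add: f4vecs_eq_zero_vec_iff[OF assms])
qed

lemma sum_f4vecs_gauss:
  "(\<Sum>z\<in>f4vecs n. trace_char (FA * herm n z z) * trace_char (herm n z w))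
     = (-2) ^ n * trace_char (FA * herm n w w)"
proof -
  have "(\<Sum>z\<in>f4vecs n. trace_char (FA * herm n z z) * trace_char (herm n z w))
      = (\<Sum>z\<in>f4vecs n. \<Prod>k<n. trace_char (FA * (z k * z k ^ 2)) * trace_char (z k * w k ^ 2))"
    by (simp add: herm_eq_sum trace_char_sum sum_distrib_left prod.distrib)
  also have "\<dots> = (\<Prod>k<n. \<Sum>c\<in>UNIV. trace_char (FA * (c * c ^ 2)) * trace_char (c * w k ^ 2))"
    by (rule sum_prod_f4vecs)
  also have "\<dots> = (\<Prod>k<n. -2 * trace_char (FA * (w k * w k ^ 2)))"
    by (simp add: trace_char_gauss)
  also have "\<dots> = (-2) ^ n * trace_char (FA * herm n w w)"
    by (simp only: prod.distrib) (simp add: herm_eq_sum trace_char_sum sum_distrib_left)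
  finally show ?thesis .
qed

lemma Phi_iff: "x \<in> Phi n \<longleftrightarrow> x \<in> f4vecs n \<and> x \<noteq> zero_vec \<and> herm n x x = 0"
  by (simp add: Phi_def F0_eq_zero)

lemma finite_Phi: "finite (Phi n)"
  by (rule finite_subset[OF _ finite_f4vecs]) (auto simp: Phi_def)

text \<open>Since \<open>herm n z z\<close> lies in \<open>{0, 1}\<close> and \<open>trace_char FA = -1\<close>, the factor
  \<open>(1 + trace_char (FA * herm n z z)) / 2\<close> is the indicator of isotropy.\<close>

lemma sum_Phi_eq_sum_f4vecs:
  "(\<Sum>z\<in>Phi n. f z) = (\<Sum>z\<in>f4vecs n. (1 + trace_char (FA * herm n z z)) / 2 * f z) - f zero_vec"
proof -
  have "(\<Sum>z\<in>f4vecs n. (1 + trace_char (FA * herm n z z)) / 2 * f z)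
      = (\<Sum>z\<in>f4vecs n. if herm n z z = 0 then f z else 0)"
    by (rule sum.cong) (use herm_self_F2[of n] in \<open>force simp: FA_FB_arith\<close>)+
  also have "\<dots> = sum f (insert zero_vec (Phi n))"
    by (simp add: sum.inter_filter[OF finite_f4vecs, symmetric])
      (rule sum.cong, auto simp: Phi_iff zero_vec_in_f4vecs)
  also have "\<dots> = f zero_vec + sum f (Phi n)"
    by (simp add: finite_Phi Phi_iff)
  finally show ?thesis
    by simp
qed

lemma sum_Phi_trace_char:
  assumes "w \<in> f4vecs n"
  shows "(\<Sum>z\<in>Phi n. trace_char (herm n z w))
    = (if w = zero_vec then 4 ^ n else 0) / 2 + (-2) ^ n / 2 * trace_char (FA * herm n w w) - 1"
proof -
  have "(\<Sum>z\<in>f4vecs n. (1 + trace_char (FA * herm n z z)) / 2 * trace_char (herm n z w))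
      = (\<Sum>z\<in>f4vecs n. trace_char (herm n z w)) / 2
        + (\<Sum>z\<in>f4vecs n. trace_char (FA * herm n z z) * trace_char (herm n z w)) / 2"
    by (simp add: sum_divide_distrib sum.distrib[symmetric] field_simps)
  then show ?thesis
    by (simp add: sum_Phi_eq_sum_f4vecs sum_f4vecs_trace_char[OF assms] sum_f4vecs_gauss)
qed

subsection \<open>The matrices \<open>S\<^sub>c\<close> and \<open>T\<^sub>l\<close>\<close>

definition scal_mat :: "f4 \<Rightarrow> mat" where
  "scal_mat c x y = (if y = smul c x then 1 else 0)"

definition char_mat :: "nat \<Rightarrow> f4 \<Rightarrow> mat" where
  "char_mat n l x y = trace_char (l * herm n x y)"

definition param_q :: "nat \<Rightarrow> complex" where
  "param_q n = (-2) ^ n"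

definition Phi_size :: "complex \<Rightarrow> complex" where
  "Phi_size q = (q * q + q) / 2 - 1"

lemma four_power_eq_param_q: "(4::complex) ^ n = param_q n * param_q n"
  by (simp add: param_q_def flip: power_mult_distrib)

lemma Phi_nonzero_coord:
  assumes "x \<in> Phi n"
  obtains k where "x k \<noteq> 0"
  using assms by (auto simp: Phi_iff zero_vec_def fun_eq_iff F0_eq_zero)

lemma smul_eq_smul_iff: "x \<in> Phi n \<Longrightarrow> smul a x = smul b x \<longleftrightarrow> a = b"
  by (metis Phi_nonzero_coord mult_cancel_right smul_apply)

lemma smul_in_Phi:
  assumes "a \<noteq> 0" "x \<in> Phi n"
  shows "smul a x \<in> Phi n"
proof -
  obtain k where "x k \<noteq> 0"
    using Phi_nonzero_coord[OF assms(2)] .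
  then have "smul a x \<noteq> zero_vec"
    using assms(1) by (auto simp: fun_eq_iff zero_vec_def F0_eq_zero)
  moreover have "smul a x \<in> f4vecs n"
    using assms(2) by (auto simp: Phi_iff f4vecs_def F0_eq_zero)
  ultimately show ?thesis
    using assms(2) by (simp add: Phi_iff herm_smul_left herm_smul_right)
qed

lemma mmul_scal_mat_left:
  assumes "a \<noteq> 0" "x \<in> Phi n"
  shows "mmul n (scal_mat a) M x y = M (smul a x) y"
  using smul_in_Phi[OF assms] finite_Phi
  by (simp add: mmul_def scal_mat_def if_distrib[of "\<lambda>t. t * _"] cong: if_cong)

lemma mmul_scal_mat_right:
  assumes "a \<noteq> 0" "y \<in> Phi n"
  shows "mmul n M (scal_mat a) x y = M x (smul (a ^ 2) y)"
proof -
  have "y = smul a z \<longleftrightarrow> z = smul (a ^ 2) y" for z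
    using f4_square_mult_self[OF assms(1)] by auto
  then show ?thesis
    using smul_in_Phi[OF _ assms(2), of "a ^ 2"] assms(1) finite_Phi
    by (simp add: mmul_def scal_mat_def if_distrib[of "\<lambda>t. _ * t"] cong: if_cong)
qed

lemma scal_mat_smul_left: "scal_mat b (smul a x) y = scal_mat (a * b) x y"
  by (simp add: scal_mat_def mult.commute)

lemma scal_mat_smul_right:
  assumes "c \<noteq> 0"
  shows "scal_mat b x (smul c y) = scal_mat (b * c ^ 2) x y"
proof -
  have "smul c y = smul b x \<longleftrightarrow> y = smul (b * c ^ 2) x"
    using f4_square_mult_self[OF assms]
    by (metis (no_types, lifting) mult.assoc mult.commute smul_one smul_smul)
  then show ?thesis
    by (simp add: scal_mat_def)
qed

lemma char_mat_smul_left: "char_mat n l (smul a x) y = char_mat n (l * a) x y"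
  by (simp add: char_mat_def herm_smul_left mult.assoc)

lemma char_mat_smul_right: "char_mat n l x (smul c y) = char_mat n (l * c ^ 2) x y"
  by (simp add: char_mat_def herm_smul_right mult.assoc)

lemma char_mat_zero [simp]: "char_mat n 0 x y = 1"
  by (simp add: char_mat_def)

text \<open>The product \<open>T\<^sub>l T\<^sub>m\<close> is a character sum over \<open>Phi n\<close> of the linear form
  \<open>\<langle>_, l x + m\<^sup>2 y\<rangle>\<close>; its Gauss-sum part only depends on \<open>\<langle>w, w\<rangle> = t + t\<^sup>2\<close> with
  \<open>t = l m \<langle>x, y\<rangle>\<close>, because \<open>x\<close> and \<open>y\<close> are isotropic.\<close>

lemma mmul_char_mat_sum:
  assumes x: "x \<in> Phi n" and y: "y \<in> Phi n"
  shows "mmul n (char_mat n l) (char_mat n m) x y =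
    (if (\<lambda>k. l * x k + m ^ 2 * y k) = zero_vec then 4 ^ n else 0) / 2
    + (-2) ^ n / 2 * trace_char (l * m * herm n x y) - 1"
proof -
  define w where "w = (\<lambda>k. l * x k + m ^ 2 * y k)"
  have w: "w \<in> f4vecs n"
    using x y by (auto simp: Phi_iff f4vecs_def w_def F0_eq_zero)
  have herm_w: "herm n z w = herm n z (smul l x) + herm n z (smul (m ^ 2) y)" for z
    unfolding w_def by (simp flip: herm_add_right)
  have "char_mat n l x z * char_mat n m z y = trace_char (herm n z w)" for z
    unfolding char_mat_def herm_w trace_char_add herm_smul_right f4_square_square
    by (subst herm_swap) (simp add: trace_char_conj)
  then have product: "mmul n (char_mat n l) (char_mat n m) x y = (\<Sum>z\<in>Phi n. trace_char (herm n z w))"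
    by (simp add: mmul_def)
  have gauss: "trace_char (FA * herm n w w) = trace_char (l * m * herm n x y)"
  proof -
    have "herm n x x = 0" "herm n y y = 0"
      using x y by (simp_all add: Phi_iff)
    moreover have "w = (\<lambda>k. smul l x k + smul (m ^ 2) y k)"
      by (simp add: w_def)
    ultimately have "herm n w w = l * m * herm n x y + (l * m * herm n x y) ^ 2"
      by (simp only: herm_add_left herm_add_right herm_smul_left herm_smul_right)
        (simp add: herm_swap[of n y x] power_mult_distrib f4_square_square f4_power_4 algebra_simps)
    then show ?thesis
      by (simp add: trace_char_FA_trace)
  qed
  show ?thesis
    unfolding product sum_Phi_trace_char[OF w] gauss by (simp add: w_def)
qed

lemma lin_comb_eq_zero_vec_iff:
  assumes x: "x \<in> Phi n" and y: "y \<in> Phi n"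
  shows "(\<lambda>k. l * x k + m ^ 2 * y k) = zero_vec \<longleftrightarrow>
    (l = 0 \<and> m = 0) \<or> (l \<noteq> 0 \<and> m \<noteq> 0 \<and> y = smul (l * m) x)"
proof (cases "m = 0")
  case True
  obtain k where k: "x k \<noteq> 0"
    using Phi_nonzero_coord[OF x] .
  have "(\<lambda>k. l * x k + m ^ 2 * y k) = zero_vec \<longleftrightarrow> (\<forall>i. l * x i = 0)"
    using True by (simp add: fun_eq_iff zero_vec_def F0_eq_zero)
  also have "\<dots> \<longleftrightarrow> l = 0"
    using k by auto
  finally show ?thesis
    using True by simp
next
  case False
  have "l * a + m ^ 2 * b = 0 \<longleftrightarrow> b = l * m * a" for a b
  proof -
    have "l * a + m ^ 2 * b = 0 \<longleftrightarrow> m ^ 2 * b = l * a"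
      by (metis f4_add_eq_0_iff)
    also have "\<dots> \<longleftrightarrow> b = l * m * a"
      using f4_square_mult_self[OF False]
      by (metis (no_types, lifting) mult.assoc mult.commute mult.left_neutral)
    finally show ?thesis .
  qed
  then have "(\<lambda>k. l * x k + m ^ 2 * y k) = zero_vec \<longleftrightarrow> y = smul (l * m) x"
    by (simp add: fun_eq_iff zero_vec_def F0_eq_zero)
  then show ?thesis
    using False y by (auto simp: smul_zero Phi_iff)
qed

lemma mmul_char_mat:
  assumes x: "x \<in> Phi n" and y: "y \<in> Phi n"
  shows "mmul n (char_mat n l) (char_mat n m) x y =
    (if l = 0 \<and> m = 0 then Phi_size (param_q n)
     else if l = 0 \<or> m = 0 then param_q n / 2 - 1
     else param_q n * param_q n / 2 * scal_mat (l * m) x y + param_q n / 2 * char_mat n (l * m) x y - 1)"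
proof -
  consider "l = 0" "m = 0" | "l = 0 \<or> m = 0" "\<not> (l = 0 \<and> m = 0)" | "l \<noteq> 0" "m \<noteq> 0"
    by blast
  then show ?thesis
  proof cases
    case 1
    then show ?thesis
      by (simp add: mmul_char_mat_sum[OF x y] four_power_eq_param_q zero_vec_def F0_eq_zero
          Phi_size_def param_q_def field_simps)
  next
    case 2
    then have "trace_char (l * m * herm n x y) = 1"
      by auto
    with 2 show ?thesis
      by (auto simp: mmul_char_mat_sum[OF x y] lin_comb_eq_zero_vec_iff[OF x y] param_q_def)
  next
    case 3
    then show ?thesis
      by (simp add: mmul_char_mat_sum[OF x y] lin_comb_eq_zero_vec_iff[OF x y] four_power_eq_param_q
          scal_mat_def char_mat_def param_q_def)
  qed
qed

subsection \<open>A basis of the Bose--Mesner algebra\<close>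

lemma f4_primitive_powers:
  assumes "f4_primitive \<alpha>"
  shows "\<alpha> \<noteq> 0" "\<alpha> ^ 2 \<noteq> 0" "\<alpha> \<noteq> 1" "\<alpha> ^ 2 \<noteq> 1" "\<alpha> ^ 2 \<noteq> \<alpha>"
    "\<alpha> * \<alpha> = \<alpha> ^ 2" "\<alpha> * \<alpha> ^ 2 = 1" "\<alpha> ^ 2 * \<alpha> = 1" "\<alpha> ^ 2 * \<alpha> ^ 2 = \<alpha>"
    "\<alpha> ^ 3 = 1" "\<alpha> ^ 4 = \<alpha>" "\<alpha> ^ 5 = \<alpha> ^ 2" "(\<alpha> ^ 2) ^ 2 = \<alpha>"
    "trace_char \<alpha> = -1" "trace_char (\<alpha> ^ 2) = -1"
  using assms by (auto simp: f4_primitive_iff FA_FB_arith eval_nat_numeral)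

text \<open>Basis element \<open>j < 3\<close> is \<open>S\<^bsub>\<alpha>\<^sup>j\<^esub>\<close>, basis element \<open>3\<close> is \<open>T\<^sub>0 = J\<close> and basis
  element \<open>4 + i\<close> is \<open>T\<^bsub>\<alpha>\<^sup>i\<^esub>\<close>.\<close>

definition basis_mat :: "nat \<Rightarrow> f4 \<Rightarrow> nat \<Rightarrow> mat" where
  "basis_mat n \<alpha> j =
    [scal_mat 1, scal_mat \<alpha>, scal_mat (\<alpha> ^ 2), char_mat n 0, char_mat n 1, char_mat n \<alpha>, char_mat n (\<alpha> ^ 2)] ! j"

definition unit_vec :: "nat \<Rightarrow> nat \<Rightarrow> complex" where
  "unit_vec i s = (if s = i then 1 else 0)"

definition struct_const :: "complex \<Rightarrow> nat \<Rightarrow> nat \<Rightarrow> nat \<Rightarrow> complex" where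
  "struct_const q j k =
    (if j < 3 \<and> k < 3 then unit_vec ((j + k) mod 3)
     else if j < 3 then (if k = 3 then unit_vec 3 else unit_vec (4 + (j + (k - 4)) mod 3))
     else if k < 3 then (if j = 3 then unit_vec 3 else unit_vec (4 + ((j - 4) + k) mod 3))
     else if j = 3 \<and> k = 3 then (\<lambda>s. Phi_size q * unit_vec 3 s)
     else if j = 3 \<or> k = 3 then (\<lambda>s. (q / 2 - 1) * unit_vec 3 s)
     else (\<lambda>s. q * q / 2 * unit_vec ((j + k - 8) mod 3) s + q / 2 * unit_vec (4 + (j + k - 8) mod 3) s
                - unit_vec 3 s))"

lemma sum_lessThan_7: "(\<Sum>l<7. f l) = f 0 + f 1 + f 2 + f 3 + f 4 + f 5 + f (6::nat)"
  by (simp add: numeral_eq_Suc)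

lemma all_lessThan_7: "(\<forall>j<7. P j) \<longleftrightarrow> P 0 \<and> P 1 \<and> P 2 \<and> P 3 \<and> P 4 \<and> P 5 \<and> P (6::nat)"
  by (simp add: numeral_eq_Suc All_less_Suc conj_ac)

lemma basis_mat_mult:
  assumes \<alpha>: "f4_primitive \<alpha>" and x: "x \<in> Phi n" and y: "y \<in> Phi n"
  shows "\<forall>j<7. \<forall>k<7. mmul n (basis_mat n \<alpha> j) (basis_mat n \<alpha> k) x y
    = (\<Sum>s<7. struct_const (param_q n) j k s * basis_mat n \<alpha> s x y)"
  unfolding all_lessThan_7
  by (simp add: basis_mat_def sum_lessThan_7 struct_const_def unit_vec_def mmul_scal_mat_left[OF _ x]
      mmul_scal_mat_right[OF _ y] mmul_char_mat[OF x y] f4_primitive_powers[OF \<alpha>] char_mat_smul_left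
      char_mat_smul_right scal_mat_smul_left scal_mat_smul_right)

definition basis_comb :: "nat \<Rightarrow> f4 \<Rightarrow> (nat \<Rightarrow> complex) \<Rightarrow> mat" where
  "basis_comb n \<alpha> c x y = (\<Sum>j<7. c j * basis_mat n \<alpha> j x y)"

definition basis_act :: "complex \<Rightarrow> nat \<Rightarrow> (nat \<Rightarrow> complex) \<Rightarrow> nat \<Rightarrow> complex" where
  "basis_act q j d s = (\<Sum>l<7. d l * struct_const q j l s)"

definition coeff_mult :: "complex \<Rightarrow> (nat \<Rightarrow> complex) \<Rightarrow> (nat \<Rightarrow> complex) \<Rightarrow> nat \<Rightarrow> complex" where
  "coeff_mult q c d s = (\<Sum>j<7. c j * basis_act q j d s)"

lemma mmul_basis_comb:
  assumes \<alpha>: "f4_primitive \<alpha>" and x: "x \<in> Phi n" and y: "y \<in> Phi n"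
  shows "mmul n (basis_comb n \<alpha> c) (basis_comb n \<alpha> d) x y = basis_comb n \<alpha> (coeff_mult (param_q n) c d) x y"
proof -
  have "mmul n (basis_comb n \<alpha> c) (basis_comb n \<alpha> d) x y
      = (\<Sum>z\<in>Phi n. \<Sum>j<7. \<Sum>k<7. c j * d k * (basis_mat n \<alpha> j x z * basis_mat n \<alpha> k z y))"
    unfolding mmul_def basis_comb_def by (simp add: sum_product mult_ac)
  also have "\<dots> = (\<Sum>j<7. \<Sum>k<7. c j * d k * mmul n (basis_mat n \<alpha> j) (basis_mat n \<alpha> k) x y)"
    unfolding mmul_def by (simp add: sum_distrib_left sum.swap[of _ "Phi n" "{..<7}"])
  also have "\<dots> = (\<Sum>j<7. \<Sum>k<7. \<Sum>s<7. c j * d k * struct_const (param_q n) j k s * basis_mat n \<alpha> s x y)"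
    using basis_mat_mult[OF \<alpha> x y] by (intro sum.cong refl) (simp add: sum_distrib_left mult_ac)
  also have "\<dots> = (\<Sum>j<7. \<Sum>s<7. \<Sum>k<7. c j * d k * struct_const (param_q n) j k s * basis_mat n \<alpha> s x y)"
    by (rule sum.cong[OF refl], rule sum.swap)
  also have "\<dots> = (\<Sum>s<7. \<Sum>j<7. \<Sum>k<7. c j * d k * struct_const (param_q n) j k s * basis_mat n \<alpha> s x y)"
    by (rule sum.swap)
  also have "\<dots> = basis_comb n \<alpha> (coeff_mult (param_q n) c d) x y"
    unfolding basis_comb_def coeff_mult_def basis_act_def
    by (simp add: sum_distrib_left sum_distrib_right mult_ac)
  finally show ?thesis .
qed

definition rel_type :: "nat \<Rightarrow> f4 \<Rightarrow> (nat \<Rightarrow> f4) \<Rightarrow> (nat \<Rightarrow> f4) \<Rightarrow> nat" where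
  "rel_type n \<alpha> x y =
    (if y = x then 0 else if y = smul \<alpha> x then 1 else if y = smul (\<alpha> ^ 2) x then 2
     else if herm n x y = 1 then 3 else if herm n x y = \<alpha> then 4 else if herm n x y = \<alpha> ^ 2 then 5 else 6)"

definition basis_val :: "nat \<Rightarrow> nat \<Rightarrow> complex" where
  "basis_val t j = [[1, 0, 0, 1, 1, 1, 1], [0, 1, 0, 1, 1, 1, 1], [0, 0, 1, 1, 1, 1, 1], [0, 0, 0, 1, 1, -1, -1],
                    [0, 0, 0, 1, -1, -1, 1], [0, 0, 0, 1, -1, 1, -1], [0, 0, 0, 1, 1, 1, 1]] ! t ! j"

lemma rel_type_less: "rel_type n \<alpha> x y < 7"
  by (simp add: rel_type_def)

lemma span1_iff:
  assumes \<alpha>: "f4_primitive \<alpha>" and x: "x \<in> Phi n" and y: "y \<in> Phi n"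
  shows "y \<in> span1 x \<longleftrightarrow> y = x \<or> y = smul \<alpha> x \<or> y = smul (\<alpha> ^ 2) x"
proof
  assume "y \<in> span1 x"
  then obtain c where c: "y = smul c x"
    by (auto simp: span1_def)
  then have "c \<noteq> 0"
    using y by (auto simp: smul_zero Phi_iff)
  then show "y = x \<or> y = smul \<alpha> x \<or> y = smul (\<alpha> ^ 2) x"
    using f4_primitive_cases[OF \<alpha>, of c] c by auto
qed (auto simp: span1_def intro: exI[of _ 1])

lemma smul_eq_self_iff: "x \<in> Phi n \<Longrightarrow> smul a x = x \<longleftrightarrow> a = 1" "x \<in> Phi n \<Longrightarrow> x = smul a x \<longleftrightarrow> a = 1"
  using smul_eq_smul_iff[of x n a 1] by auto

lemma herm_smul_self: "x \<in> Phi n \<Longrightarrow> herm n x (smul c x) = 0"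
  by (simp add: herm_smul_right Phi_iff)

lemma adj_eq_rel_type:
  assumes \<alpha>: "f4_primitive \<alpha>" and x: "x \<in> Phi n" and y: "y \<in> Phi n"
  shows "\<forall>l<7. adj n \<alpha> l x y = (if l = rel_type n \<alpha> x y then 1 else 0)"
  unfolding all_lessThan_7
  apply (simp add: adj_def rel_def rel_type_def x y F0_eq_zero span1_iff[OF \<alpha> x y] smul_eq_smul_iff[OF x]
      smul_eq_self_iff[OF x] herm_smul_self[OF x] f4_primitive_powers[OF \<alpha>])
  using f4_primitive_cases[OF \<alpha>, of "herm n x y"] f4_primitive_powers[OF \<alpha>] x
  by (auto simp: Phi_iff)

lemma basis_mat_eq_basis_val:
  assumes \<alpha>: "f4_primitive \<alpha>" and x: "x \<in> Phi n" and y: "y \<in> Phi n"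
  shows "\<forall>j<7. basis_mat n \<alpha> j x y = basis_val (rel_type n \<alpha> x y) j"
  unfolding all_lessThan_7
  apply (simp add: basis_mat_def scal_mat_def char_mat_def rel_type_def basis_val_def
      smul_eq_smul_iff[OF x] smul_eq_self_iff[OF x] herm_smul_self[OF x] f4_primitive_powers[OF \<alpha>])
  using f4_primitive_cases[OF \<alpha>, of "herm n x y"] f4_primitive_powers[OF \<alpha>] x
  by (auto simp: FA_FB_arith Phi_iff)

subsection \<open>Primitive idempotents and eigenvalues\<close>

text \<open>Row \<open>i\<close> of \<open>idem_coeff\<close> is the coordinate vector of \<open>E\<^sub>i\<close> in the basis and row \<open>i\<close> of
  \<open>eigval\<close> lists the eigenvalues of the basis matrices on \<open>E\<^sub>i\<close>; \<open>w\<close> and \<open>v\<close> stand for the two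
  primitive cube roots of unity.\<close>

definition idem_coeff :: "complex \<Rightarrow> complex \<Rightarrow> complex \<Rightarrow> nat \<Rightarrow> nat \<Rightarrow> complex" where
  "idem_coeff q w v i s = [
     [0, 0, 0, 1 / Phi_size q, 0, 0, 0],
     [1/9, v/9, w/9, 0, 2/(9*q), 2*v/(9*q), 2*w/(9*q)],
     [1/9, w/9, v/9, 0, 2/(9*q), 2*w/(9*q), 2*v/(9*q)],
     [1/9, 1/9, 1/9, -(2*q-2)/(3*q*Phi_size q), 2/(9*q), 2/(9*q), 2/(9*q)],
     [2/9, 2*v/9, 2*w/9, 0, -2/(9*q), -2*v/(9*q), -2*w/(9*q)],
     [2/9, 2*w/9, 2*v/9, 0, -2/(9*q), -2*w/(9*q), -2*v/(9*q)],
     [2/9, 2/9, 2/9, -(q+2)/(3*q*Phi_size q), -2/(9*q), -2/(9*q), -2/(9*q)] ] ! i ! s"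

definition eigval :: "complex \<Rightarrow> complex \<Rightarrow> complex \<Rightarrow> nat \<Rightarrow> nat \<Rightarrow> complex" where
  "eigval q w v i j = [
     [1, 1, 1, Phi_size q, q/2 - 1, q/2 - 1, q/2 - 1],
     [1, w, v, 0, q, q*w, q*v],
     [1, v, w, 0, q, q*v, q*w],
     [1, 1, 1, 0, q, q, q],
     [1, w, v, 0, -q/2, -q*w/2, -q*v/2],
     [1, v, w, 0, -q/2, -q*v/2, -q*w/2],
     [1, 1, 1, 0, -q/2, -q/2, -q/2] ] ! i ! j"

definition char_tab :: "complex \<Rightarrow> complex \<Rightarrow> complex \<Rightarrow> nat \<Rightarrow> nat \<Rightarrow> complex" where
  "char_tab q w v i j = [
     [1, 1, 1, q*q/8, q*q/8, q*q/8, q*q/8 + q/2 - 4],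
     [1, w, v, q/2, q*v/2, q*w/2, 0],
     [1, v, w, q/2, q*w/2, q*v/2, 0],
     [1, 1, 1, -q/4, -q/4, -q/4, 3*q/4 - 3],
     [1, w, v, -q/4, -q*v/4, -q*w/4, 0],
     [1, v, w, -q/4, -q*w/4, -q*v/4, 0],
     [1, 1, 1, q/8, q/8, q/8, -3*q/8 - 3] ] ! i ! j"

definition idem_val :: "complex \<Rightarrow> complex \<Rightarrow> complex \<Rightarrow> nat \<Rightarrow> nat \<Rightarrow> complex" where
  "idem_val q w v i t = (\<Sum>s<7. idem_coeff q w v i s * basis_val t s)"

locale coeff_params =
  fixes q w v :: complex
  assumes q_nonzero: "q \<noteq> 0" and Phi_size_nonzero: "Phi_size q \<noteq> 0"
    and roots_sum: "w + v = -1" and roots_prod: "w * v = 1"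
begin

lemma basis_act_idem_coeff:
  "\<forall>j<7. \<forall>k<7. \<forall>s<7. basis_act q j (idem_coeff q w v k) s = eigval q w v k j * idem_coeff q w v k s"
  using roots_sum roots_prod unfolding all_lessThan_7
  apply (intro conjI impI)
  apply (simp_all add: basis_act_def sum_lessThan_7 struct_const_def idem_coeff_def eigval_def unit_vec_def)
  apply (simp_all add: field_simps q_nonzero Phi_size_nonzero)
  apply (simp_all add: Phi_size_def field_simps)?
  apply algebra+
  done

lemma idem_coeff_eigval_orthogonal:
  "\<forall>i<7. \<forall>k<7. (\<Sum>j<7. idem_coeff q w v i j * eigval q w v k j) = (if i = k then 1 else 0)"
  using roots_sum roots_prod unfolding all_lessThan_7
  apply (intro conjI impI)
  apply (simp_all add: sum_lessThan_7 idem_coeff_def eigval_def)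
  apply (simp_all add: field_simps q_nonzero Phi_size_nonzero)
  apply (simp_all add: Phi_size_def field_simps)?
  apply algebra+
  done

lemma sum_idem_coeff: "\<forall>s<7. (\<Sum>i<7. idem_coeff q w v i s) = unit_vec 0 s"
  using roots_sum unfolding all_lessThan_7
  apply (simp add: sum_lessThan_7 idem_coeff_def unit_vec_def field_simps q_nonzero Phi_size_nonzero)
  apply algebra
  done

lemma char_tab_idem_val:
  "\<forall>j<7. \<forall>t<7. (\<Sum>i<7. char_tab q w v i j * idem_val q w v i t) = (if j = t then 1 else 0)"
  using roots_sum roots_prod unfolding all_lessThan_7
  apply (intro conjI impI)
  apply (simp_all add: sum_lessThan_7 char_tab_def idem_val_def idem_coeff_def basis_val_def)
  apply (simp_all add: field_simps q_nonzero Phi_size_nonzero)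
  apply (simp_all add: Phi_size_def field_simps)?
  apply algebra+
  done

lemma idem_val_diagonal_nonzero:
  assumes "q + 8 \<noteq> 0" "q - 1 \<noteq> 0" "q - 4 \<noteq> 0" "q + 2 \<noteq> 0"
  shows "\<forall>i<7. idem_val q w v i 0 \<noteq> 0"
proof -
  have "\<forall>i<7. idem_val q w v i 0 =
     [1 / Phi_size q, 1/9, 1/9, (q+8)*(q-1) / (18 * Phi_size q), 2/9, 2/9, (q-4)*(q+2) / (9 * Phi_size q)] ! i"
    using roots_sum unfolding all_lessThan_7
    apply (simp add: sum_lessThan_7 idem_val_def idem_coeff_def basis_val_def field_simps q_nonzero
        Phi_size_nonzero)
    apply (simp add: Phi_size_def field_simps)
    apply algebra
    done
  then show ?thesis
    using assms Phi_size_nonzero unfolding all_lessThan_7 by auto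
qed

lemma coeff_mult_idem_coeff:
  assumes "i < 7" "k < 7" "s < 7"
  shows "coeff_mult q (idem_coeff q w v i) (idem_coeff q w v k) s = (if i = k then idem_coeff q w v i s else 0)"
proof -
  have "coeff_mult q (idem_coeff q w v i) (idem_coeff q w v k) s
      = (\<Sum>j<7. idem_coeff q w v i j * eigval q w v k j) * idem_coeff q w v k s"
    unfolding coeff_mult_def sum_distrib_right
    using basis_act_idem_coeff assms by (intro sum.cong refl) (simp add: mult.assoc)
  then show ?thesis
    using idem_coeff_eigval_orthogonal assms by simp
qed

end

lemma omega_add_cnj: "omega + cnj omega = -1"
  by (simp add: omega_def complex_eq_iff)

lemma omega_mult_cnj: "omega * cnj omega = 1"
  by (simp add: omega_def complex_eq_iff field_simps)

lemma param_q_norm_ge: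
  assumes "n \<ge> 4"
  shows "norm (param_q n) \<ge> 16"
proof -
  have "(2::real) ^ 4 \<le> 2 ^ n"
    using assms by (intro power_increasing) auto
  then show ?thesis
    by (simp add: param_q_def norm_power)
qed

lemma param_q_ne:
  assumes "n \<ge> 4" "norm c < 16"
  shows "param_q n \<noteq> c"
  using param_q_norm_ge[OF assms(1)] assms(2) by auto

lemma Phi_size_param_q_nonzero:
  assumes "n \<ge> 4"
  shows "Phi_size (param_q n) \<noteq> 0"
proof -
  have "Phi_size (param_q n) = (param_q n + 2) * (param_q n - 1) / 2"
    by (simp add: Phi_size_def field_simps)
  moreover have "param_q n + 2 \<noteq> 0" "param_q n - 1 \<noteq> 0"
    using param_q_ne[OF assms, of "-2"] param_q_ne[OF assms, of 1] by (auto simp: eq_neg_iff_add_eq_0)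
  ultimately show ?thesis
    by (simp only: divide_eq_0_iff mult_eq_0_iff) simp
qed

lemma coeff_params_omega: "n \<ge> 4 \<Longrightarrow> coeff_params (param_q n) omega (cnj omega)"
  using param_q_ne[of n 0] Phi_size_param_q_nonzero omega_add_cnj omega_mult_cnj
  by unfold_locales auto

definition prim_idem :: "nat \<Rightarrow> f4 \<Rightarrow> nat \<Rightarrow> mat" where
  "prim_idem n \<alpha> i = basis_comb n \<alpha> (idem_coeff (param_q n) omega (cnj omega) i)"

lemma prim_idem_eq_idem_val:
  assumes \<alpha>: "f4_primitive \<alpha>" and x: "x \<in> Phi n" and y: "y \<in> Phi n"
  shows "prim_idem n \<alpha> i x y = idem_val (param_q n) omega (cnj omega) i (rel_type n \<alpha> x y)"
  unfolding prim_idem_def basis_comb_def idem_val_def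
  using basis_mat_eq_basis_val[OF \<alpha> x y] by (intro sum.cong refl) simp

lemma prim_idem_in_bose_mesner:
  assumes \<alpha>: "f4_primitive \<alpha>"
  shows "in_bose_mesner n \<alpha> (prim_idem n \<alpha> i)"
  unfolding in_bose_mesner_def
proof (intro exI ballI)
  fix x y assume x: "x \<in> Phi n" and y: "y \<in> Phi n"
  show "prim_idem n \<alpha> i x y = (\<Sum>j<7. idem_val (param_q n) omega (cnj omega) i j * adj n \<alpha> j x y)"
    using adj_eq_rel_type[OF \<alpha> x y] rel_type_less[of n \<alpha> x y]
    by (simp add: prim_idem_eq_idem_val[OF \<alpha> x y] if_distrib[of "\<lambda>t. _ * t"] cong: if_cong)
qed

lemma mmul_prim_idem:
  assumes "n \<ge> 4" and \<alpha>: "f4_primitive \<alpha>" and x: "x \<in> Phi n" and y: "y \<in> Phi n"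
    and "i < 7" "k < 7"
  shows "mmul n (prim_idem n \<alpha> i) (prim_idem n \<alpha> k) x y = (if i = k then prim_idem n \<alpha> i x y else 0)"
  using coeff_params.coeff_mult_idem_coeff[OF coeff_params_omega[OF assms(1)]] assms(5,6)
  by (simp add: prim_idem_def mmul_basis_comb[OF \<alpha> x y]) (simp add: basis_comb_def)

lemma sum_prim_idem:
  assumes "n \<ge> 4"
  shows "(\<Sum>i<7. prim_idem n \<alpha> i x y) = (if x = y then 1 else 0)"
proof -
  have "(\<Sum>i<7. prim_idem n \<alpha> i x y)
      = (\<Sum>s<7. (\<Sum>i<7. idem_coeff (param_q n) omega (cnj omega) i s) * basis_mat n \<alpha> s x y)"
    unfolding prim_idem_def basis_comb_def sum_distrib_right by (rule sum.swap)
  also have "\<dots> = basis_mat n \<alpha> 0 x y"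
    using coeff_params.sum_idem_coeff[OF coeff_params_omega[OF assms(1)]]
    by (simp add: sum_lessThan_7 unit_vec_def)
  finally show ?thesis
    by (auto simp: basis_mat_def scal_mat_def)
qed

lemma card_Phi: "of_nat (card (Phi n)) = Phi_size (param_q n)"
  using sum_Phi_trace_char[OF zero_vec_in_f4vecs, of n]
  by (simp add: four_power_eq_param_q Phi_size_def param_q_def)

lemma prim_idem_0: "prim_idem n \<alpha> 0 x y = 1 / of_nat (card (Phi n))"
  by (simp add: card_Phi prim_idem_def basis_comb_def sum_lessThan_7 idem_coeff_def basis_mat_def)

lemma isotropic_vec_in_Phi:
  assumes "n \<ge> 2"
  shows "(\<lambda>k. if k < (2::nat) then 1 else 0) \<in> Phi n"
proof -
  let ?x = "\<lambda>k. if k < (2::nat) then 1 else 0 :: f4"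
  have "herm n ?x ?x = (\<Sum>k<(2::nat). ?x k * ?x k ^ 2)"
    unfolding herm_eq_sum using assms by (intro sum.mono_neutral_right) auto
  also have "\<dots> = 0"
    by (simp add: eval_nat_numeral)
  finally show ?thesis
    using assms fun_cong[of ?x zero_vec 0]
    by (auto simp: Phi_iff f4vecs_def zero_vec_def F0_eq_zero)
qed

lemma prim_idem_diagonal_nonzero:
  assumes "n \<ge> 4" and \<alpha>: "f4_primitive \<alpha>" and x: "x \<in> Phi n" and "i < 7"
  shows "prim_idem n \<alpha> i x x \<noteq> 0"
proof -
  have "param_q n + 8 \<noteq> 0" "param_q n - 1 \<noteq> 0" "param_q n - 4 \<noteq> 0" "param_q n + 2 \<noteq> 0"
    using param_q_ne[OF assms(1), of "-8"] param_q_ne[OF assms(1), of 1] param_q_ne[OF assms(1), of 4]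
      param_q_ne[OF assms(1), of "-2"]
    by (auto simp: eq_neg_iff_add_eq_0)
  then have "idem_val (param_q n) omega (cnj omega) i 0 \<noteq> 0"
    using coeff_params.idem_val_diagonal_nonzero[OF coeff_params_omega[OF assms(1)]] assms(4) by blast
  moreover have "rel_type n \<alpha> x x = 0"
    by (simp add: rel_type_def)
  ultimately show ?thesis
    by (simp add: prim_idem_eq_idem_val[OF \<alpha> x x])
qed

lemma power_minus_two_eq_param_q:
  assumes "n \<ge> 4"
  shows "(-2::complex) ^ (n - 1) = - param_q n / 2" "(-2::complex) ^ (n - 2) = param_q n / 4"
    "(-2::complex) ^ (n - 3) = - param_q n / 8" "(2::complex) ^ (2 * n - 3) = param_q n * param_q n / 8"
proof -
  define m where "m = n - 3"
  have n: "n - 1 = m + 2" "n - 2 = m + 1" "n - 3 = m" "2 * n - 3 = 2 * m + 3" "n = m + 3"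
    using assms by (auto simp: m_def)
  have "(2::complex) ^ (2 * m) = (-2) ^ m * (-2) ^ m"
    by (simp add: power_mult flip: power_mult_distrib)
  then show "(-2::complex) ^ (n - 1) = - param_q n / 2" "(-2::complex) ^ (n - 2) = param_q n / 4"
    "(-2::complex) ^ (n - 3) = - param_q n / 8" "(2::complex) ^ (2 * n - 3) = param_q n * param_q n / 8"
    unfolding n param_q_def by (simp_all add: power_add)
qed

lemma char_table_eq_char_tab:
  assumes "n \<ge> 4"
  shows "\<forall>i<7. \<forall>j<7. char_table n i j = char_tab (param_q n) omega (cnj omega) i j"
  unfolding all_lessThan_7 char_table_def char_tab_def Let_def power_minus_two_eq_param_q[OF assms]
  by (simp add: field_simps)

lemma adj_eq_sum_char_table:
  assumes "n \<ge> 4" and \<alpha>: "f4_primitive \<alpha>" and x: "x \<in> Phi n" and y: "y \<in> Phi n" and "j < 7"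
  shows "adj n \<alpha> j x y = (\<Sum>i<7. char_table n i j * prim_idem n \<alpha> i x y)"
proof -
  have "(\<Sum>i<7. char_table n i j * prim_idem n \<alpha> i x y)
      = (\<Sum>i<7. char_tab (param_q n) omega (cnj omega) i j
                * idem_val (param_q n) omega (cnj omega) i (rel_type n \<alpha> x y))"
    using char_table_eq_char_tab[OF assms(1)] assms(5)
    by (intro sum.cong refl) (simp add: prim_idem_eq_idem_val[OF \<alpha> x y])
  also have "\<dots> = (if j = rel_type n \<alpha> x y then 1 else 0)"
    using coeff_params.char_tab_idem_val[OF coeff_params_omega[OF assms(1)]] assms(5) rel_type_less
    by simp
  finally show ?thesis
    using adj_eq_rel_type[OF \<alpha> x y] assms(5) by simp
qed

lemma primitive_idempotents_prim_idem:
  assumes "n \<ge> 4" and \<alpha>: "f4_primitive \<alpha>"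
  shows "primitive_idempotents n \<alpha> (prim_idem n \<alpha>)"
proof -
  have "\<exists>x\<in>Phi n. \<exists>y\<in>Phi n. prim_idem n \<alpha> i x y \<noteq> 0" if "i < 7" for i
    using isotropic_vec_in_Phi[of n] prim_idem_diagonal_nonzero[OF assms _ that] assms(1) by force
  then show ?thesis
    unfolding primitive_idempotents_def
    using prim_idem_in_bose_mesner[OF \<alpha>] mmul_prim_idem[OF assms] sum_prim_idem[OF assms(1)]
    by blast
qed

theorem theorem5p1:
  fixes n :: nat and \<alpha> :: f4
  assumes "n \<ge> 4" and "f4_primitive \<alpha>"
  shows "\<exists>E :: nat \<Rightarrow> mat.
           primitive_idempotents n \<alpha> E \<and>
           (\<forall>x\<in>Phi n. \<forall>y\<in>Phi n. E 0 x y = 1 / of_nat (card (Phi n))) \<and>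
           (\<forall>j<7. \<forall>x\<in>Phi n. \<forall>y\<in>Phi n.
               adj n \<alpha> j x y = (\<Sum>i<7. char_table n i j * E i x y))"
  using primitive_idempotents_prim_idem[OF assms] prim_idem_0
    adj_eq_sum_char_table[OF assms]
  by blast

end
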